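(* Let $0<\beta<2$ and let $\Lambda>0$, $\delta>0$ with $\beta+\delta>1$. For $\varepsilon$ with $0<\varepsilon<\beta/2$, and additionally $\varepsilon<\frac{\beta-1}{2}$ if $\beta>1$, let $u_\varepsilon\in C^1(\mathbb{R})$ be an even function of the form \[u_\varepsilon(x)=\begin{cases}|x|^{\beta-\varepsilon},&|x|\ge1,\\ \phi(x),&|x|<1,\end{cases}\] where $\phi$ (possibly depending on $\varepsilon$) satisfies $0\le\phi(x)\le\Lambda|x|^{\beta+\delta}$ and $|\phi'(x)|\le\Lambda|x|^{\beta+\delta-1}$ for $|x|\le1$. Then there exist $\varepsilon_0>0$ and constants $C_0,C_1>0$, independent of $\varepsilon$, such that for all admissible $0<\varepsilon<\varepsilon_0$ \[\mathcal{L}u_\varepsilon(0)\ge\frac{C_0}{\varepsilon},\qquad 0<\Gamma_2(u_\varepsilon)(0)\le\frac{C_1}{\varepsilon}.\] In particular, for every $\mu>0$ there exists such a $u$ with $0<\Gamma_2(u)(0)<\mu(\mathcal{L}u(0))^2<\infty$.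
   Context: Here $d=1$: $c_{\beta,1}=\frac{2^\beta\Gamma(\frac{1+\beta}{2})}{\pi^{1/2}|\Gamma(-\frac{\beta}{2})|}$, $\mathcal{L}u(x)=c_{\beta,1}\int_{\mathbb{R}}\frac{u(x+h)-2u(x)+u(x-h)}{|h|^{1+\beta}}dh$, $\Gamma_2(u)(x)=c_{\beta,1}^2\int_{\mathbb{R}}\int_{\mathbb{R}}\frac{[u(x+h+\sigma)-u(x+h)-u(x+\sigma)+u(x)]^2}{|h|^{1+\beta}|\sigma|^{1+\beta}}dh\,d\sigma$ (defined by these integrals also for unbounded functions when they converge). *)

theory Defs
  imports "HOL-Analysis.Analysis"
begin

definition c_beta :: "real \<Rightarrow> real" where
  "c_beta \<beta> = 2 powr \<beta> * Gamma ((1 + \<beta>) / 2) / (pi powr (1/2) * \<bar>Gamma (- \<beta> / 2)\<bar>)"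

definition L_integrand :: "real \<Rightarrow> (real \<Rightarrow> real) \<Rightarrow> real \<Rightarrow> real \<Rightarrow> real" where
  "L_integrand \<beta> u x h = (u (x + h) - 2 * u x + u (x - h)) / \<bar>h\<bar> powr (1 + \<beta>)"

definition frac_L :: "real \<Rightarrow> (real \<Rightarrow> real) \<Rightarrow> real \<Rightarrow> real" where
  "frac_L \<beta> u x = c_beta \<beta> * (\<integral>h. L_integrand \<beta> u x h \<partial>lborel)"

definition G2_integrand :: "real \<Rightarrow> (real \<Rightarrow> real) \<Rightarrow> real \<Rightarrow> real \<times> real \<Rightarrow> real" where
  "G2_integrand \<beta> u x p = (case p of (h, \<sigma>) \<Rightarrow>
     (u (x + h + \<sigma>) - u (x + h) - u (x + \<sigma>) + u x)\<^sup>2 / (\<bar>h\<bar> powr (1 + \<beta>) * \<bar>\<sigma>\<bar> powr (1 + \<beta>)))"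

definition Gamma2 :: "real \<Rightarrow> (real \<Rightarrow> real) \<Rightarrow> real \<Rightarrow> real" where
  "Gamma2 \<beta> u x = (c_beta \<beta>)\<^sup>2 * (\<integral>p. G2_integrand \<beta> u x p \<partial>(lborel \<Otimes>\<^sub>M lborel))"

definition admissible_eps :: "real \<Rightarrow> real \<Rightarrow> bool" where
  "admissible_eps \<beta> \<epsilon> \<longleftrightarrow> 0 < \<epsilon> \<and> \<epsilon> < \<beta> / 2 \<and> (\<beta> > 1 \<longrightarrow> \<epsilon> < (\<beta> - 1) / 2)"

text \<open>u is a C^1 even function equal to |x|^(beta-eps) for |x| >= 1, and on |x| <= 1
  it coincides with (the continuous C^1 extension of) phi satisfying the bounds.\<close>
definition test_fun :: "real \<Rightarrow> real \<Rightarrow> real \<Rightarrow> real \<Rightarrow> (real \<Rightarrow> real) \<Rightarrow> bool" where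
  "test_fun \<beta> \<Lambda> \<delta> \<epsilon> u \<longleftrightarrow>
     u C1_differentiable_on UNIV \<and>
     (\<forall>x. u (- x) = u x) \<and>
     (\<forall>x. \<bar>x\<bar> \<ge> 1 \<longrightarrow> u x = \<bar>x\<bar> powr (\<beta> - \<epsilon>)) \<and>
     (\<forall>x. \<bar>x\<bar> \<le> 1 \<longrightarrow> 0 \<le> u x \<and> u x \<le> \<Lambda> * \<bar>x\<bar> powr (\<beta> + \<delta>)) \<and>
     (\<forall>x. \<bar>x\<bar> \<le> 1 \<longrightarrow> \<bar>deriv u x\<bar> \<le> \<Lambda> * \<bar>x\<bar> powr (\<beta> + \<delta> - 1))"

end

theory Submission
  imports Defs
begin

text \<open>At the origin \<open>u\<close> vanishes and is even, so the integrand of \<open>L u(0)\<close> is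
  \<open>2 u(h) / |h|^(1+\<beta>)\<close>; its tail \<open>|h|^(-1-\<epsilon>)\<close> on \<open>|h| \<ge> 1\<close> already forces \<open>L u(0) \<ge> C/\<epsilon>\<close>.
  The integrand of \<open>\<Gamma>\<^sub>2(u)(0)\<close> is the square of the mixed difference \<open>u(h+\<sigma>) - u(h) - u(\<sigma>)\<close>,
  which by symmetry only needs to be bounded on the cone \<open>|\<sigma>| \<le> |h|\<close>. There the mean value
  theorem gives \<open>|\<sigma>| |h|^(\<beta>+\<delta>-1)\<close> for \<open>|h| \<le> 1\<close>, and interpolating between the mean value
  bound and the trivial bound gives \<open>|\<sigma>|^\<alpha> |h|^(\<beta>-\<epsilon>-\<alpha>)\<close> for \<open>|h| > 1\<close>, with \<open>\<alpha>\<close> slightly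
  above \<open>\<beta>/2\<close>. Integrating first in \<open>\<sigma>\<close> leaves \<open>|h|^(2\<delta>-1)\<close> near \<open>0\<close> and \<open>|h|^(-1-2\<epsilon>)\<close> at
  infinity, whence \<open>\<Gamma>\<^sub>2(u)(0) = O(1/\<delta> + 1/\<epsilon>)\<close>; it is positive because the mixed difference at
  \<open>(2, 2)\<close> is \<open>2^p (2^p - 2) \<noteq> 0\<close> for \<open>p = \<beta> - \<epsilon> \<noteq> 1\<close>. Thus \<open>\<Gamma>\<^sub>2(u)(0) / (L u(0))\<^sup>2 = O(\<epsilon>)\<close>, and an
  explicit admissible \<open>u\<close>, a quadratic in \<open>x\<^sup>2\<close> glued to \<open>|x|^(\<beta>-\<epsilon>)\<close>, gives the last claim.\<close>

section \<open>Integrals of powers on the real line\<close>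

lemma nn_integral_abs_le_twice_nonneg:
  fixes F :: "real \<Rightarrow> real"
  assumes [measurable]: "F \<in> borel_measurable borel"
  shows "(\<integral>\<^sup>+x. ennreal (F \<bar>x\<bar>) \<partial>lborel) \<le> 2 * (\<integral>\<^sup>+x. ennreal (F x) * indicator {0..} x \<partial>lborel)"
proof -
  have "(\<integral>\<^sup>+x. ennreal (F \<bar>x\<bar>) \<partial>lborel)
      = (\<integral>\<^sup>+x. ennreal (F x) * indicator {0..} x + ennreal (F (-x)) * indicator {..<0} x \<partial>lborel)"
    by (intro nn_integral_cong) (auto simp: indicator_def)
  also have "\<dots> = (\<integral>\<^sup>+x. ennreal (F x) * indicator {0..} x \<partial>lborel)
                + (\<integral>\<^sup>+x. ennreal (F (-x)) * indicator {..<0} x \<partial>lborel)"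
    by (intro nn_integral_add) auto
  also have "(\<integral>\<^sup>+x. ennreal (F (-x)) * indicator {..<0} x \<partial>lborel)
      = (\<integral>\<^sup>+x. ennreal (F (-(0 + (-1) * x))) * indicator {..<0} (0 + (-1) * x) \<partial>lborel)"
    by (subst nn_integral_real_affine[where c="-1" and t=0]) auto
  also have "\<dots> \<le> (\<integral>\<^sup>+x. ennreal (F x) * indicator {0..} x \<partial>lborel)"
    by (intro nn_integral_mono) (auto simp: indicator_def)
  finally show ?thesis
    by (simp add: mult_2 add_left_mono)
qed

lemma nn_integral_abs_powr_ball_le:
  fixes c r :: real
  assumes "-1 < c" "0 \<le> r"
  shows "(\<integral>\<^sup>+x. ennreal (indicator {..r} \<bar>x\<bar> * \<bar>x\<bar> powr c) \<partial>lborel) \<le> ennreal (2 * r powr (c + 1) / (c + 1))"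
proof -
  have "(\<integral>\<^sup>+x. ennreal (indicator {..r} \<bar>x\<bar> * \<bar>x\<bar> powr c) \<partial>lborel)
      \<le> 2 * (\<integral>\<^sup>+x. ennreal (indicator {..r} x * x powr c) * indicator {0..} x \<partial>lborel)"
    by (rule nn_integral_abs_le_twice_nonneg) measurable
  also have "(\<integral>\<^sup>+x. ennreal (indicator {..r} x * x powr c) * indicator {0..} x \<partial>lborel)
      = (\<integral>\<^sup>+x. ennreal (x powr c) * indicator {0..r} x \<partial>lborel)"
    by (intro nn_integral_cong) (auto simp: indicator_def)
  also have "\<dots> = ennreal (r powr (c + 1) / (c + 1))"
    using has_integral_powr_from_0 assms by (intro nn_integral_has_integral_lebesgue') auto
  finally show ?thesis
    using assms by (simp add: ennreal_mult' flip: times_divide_eq_right)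
qed

lemma nn_integral_powr_to_inf:
  fixes c :: real
  assumes "c < -1"
  shows "(\<integral>\<^sup>+x. ennreal (x powr c) * indicator {1..} x \<partial>lborel) = ennreal (1 / (- c - 1))"
proof -
  have "((\<lambda>x. x powr c) has_integral 1 / (- c - 1)) {1..}"
    using has_integral_powr_to_inf[of c 1] assms by (simp add: minus_divide_right)
  then show ?thesis
    by (intro nn_integral_has_integral_lebesgue') auto
qed

lemma nn_integral_abs_powr_outside_le:
  fixes c :: real
  assumes "c < -1"
  shows "(\<integral>\<^sup>+x. ennreal (indicator {1<..} \<bar>x\<bar> * \<bar>x\<bar> powr c) \<partial>lborel) \<le> ennreal (2 / (- c - 1))"
proof -
  have "(\<integral>\<^sup>+x. ennreal (indicator {1<..} \<bar>x\<bar> * \<bar>x\<bar> powr c) \<partial>lborel)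
      \<le> 2 * (\<integral>\<^sup>+x. ennreal (indicator {1<..} x * x powr c) * indicator {0..} x \<partial>lborel)"
    by (rule nn_integral_abs_le_twice_nonneg) measurable
  also have "(\<integral>\<^sup>+x. ennreal (indicator {1<..} x * x powr c) * indicator {0..} x \<partial>lborel)
      \<le> (\<integral>\<^sup>+x. ennreal (x powr c) * indicator {1..} x \<partial>lborel)"
    by (intro nn_integral_mono) (auto simp: indicator_def)
  also have "\<dots> = ennreal (1 / (- c - 1))"
    using assms by (rule nn_integral_powr_to_inf)
  also have "2 * ennreal (1 / (- c - 1)) = ennreal (2 / (- c - 1))"
    using assms by (simp add: ennreal_mult' divide_inverse)
  finally show ?thesis
    by (simp add: mult_left_mono)
qed

lemma nn_integral_abs_powr_outside_ge:
  fixes c :: real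
  assumes "c < -1"
  shows "ennreal (1 / (- c - 1)) \<le> (\<integral>\<^sup>+x. ennreal (indicator {1..} \<bar>x\<bar> * \<bar>x\<bar> powr c) \<partial>lborel)"
  unfolding nn_integral_powr_to_inf[OF assms, symmetric]
  by (intro nn_integral_mono) (auto simp: indicator_def)

lemma nn_integral_two_scale_powr_le:
  fixes a b A B :: real
  assumes "0 < a" "0 < b" "0 \<le> A" "0 \<le> B"
  shows "(\<integral>\<^sup>+x. ennreal (if \<bar>x\<bar> \<le> 1 then A * \<bar>x\<bar> powr (a - 1) else B * \<bar>x\<bar> powr (-1 - b)) \<partial>lborel)
      \<le> ennreal (2 * A / a + 2 * B / b)"
proof -
  have "(\<integral>\<^sup>+x. ennreal (if \<bar>x\<bar> \<le> 1 then A * \<bar>x\<bar> powr (a - 1) else B * \<bar>x\<bar> powr (-1 - b)) \<partial>lborel)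
      = (\<integral>\<^sup>+x. ennreal A * ennreal (indicator {..1} \<bar>x\<bar> * \<bar>x\<bar> powr (a - 1))
              + ennreal B * ennreal (indicator {1<..} \<bar>x\<bar> * \<bar>x\<bar> powr (-1 - b)) \<partial>lborel)"
    using assms by (intro nn_integral_cong) (auto simp: indicator_def ennreal_mult[symmetric])
  also have "\<dots> = ennreal A * (\<integral>\<^sup>+x. ennreal (indicator {..1} \<bar>x\<bar> * \<bar>x\<bar> powr (a - 1)) \<partial>lborel)
              + ennreal B * (\<integral>\<^sup>+x. ennreal (indicator {1<..} \<bar>x\<bar> * \<bar>x\<bar> powr (-1 - b)) \<partial>lborel)"
    by (subst nn_integral_add) (auto simp: nn_integral_cmult)
  also have "\<dots> \<le> ennreal A * ennreal (2 * 1 powr (a - 1 + 1) / (a - 1 + 1))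
              + ennreal B * ennreal (2 / (- (-1 - b) - 1))"
    using assms by (intro add_mono mult_left_mono nn_integral_abs_powr_ball_le
        nn_integral_abs_powr_outside_le) auto
  also have "\<dots> = ennreal (2 * A / a + 2 * B / b)"
    using assms by (simp add: ennreal_mult'[symmetric] ennreal_plus[symmetric] mult.commute del: ennreal_plus)
  finally show ?thesis .
qed

lemma nn_integral_cone_powr_le:
  fixes C s t h :: real
  assumes "-1 < s" "0 \<le> C"
  shows "(\<integral>\<^sup>+\<sigma>. ennreal (if \<bar>\<sigma>\<bar> \<le> \<bar>h\<bar> then C * \<bar>\<sigma>\<bar> powr s * \<bar>h\<bar> powr t else 0) \<partial>lborel)
      \<le> ennreal (2 * C / (s + 1) * \<bar>h\<bar> powr (s + t + 1))"
proof -
  have "(\<integral>\<^sup>+\<sigma>. ennreal (if \<bar>\<sigma>\<bar> \<le> \<bar>h\<bar> then C * \<bar>\<sigma>\<bar> powr s * \<bar>h\<bar> powr t else 0) \<partial>lborel)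
      = ennreal (C * \<bar>h\<bar> powr t) * (\<integral>\<^sup>+\<sigma>. ennreal (indicator {..\<bar>h\<bar>} \<bar>\<sigma>\<bar> * \<bar>\<sigma>\<bar> powr s) \<partial>lborel)"
    using assms by (subst nn_integral_cmult[symmetric])
      (auto intro!: nn_integral_cong simp: indicator_def ennreal_mult[symmetric] mult_ac)
  also have "\<dots> \<le> ennreal (C * \<bar>h\<bar> powr t) * ennreal (2 * \<bar>h\<bar> powr (s + 1) / (s + 1))"
    using assms by (intro mult_left_mono nn_integral_abs_powr_ball_le) auto
  also have "\<dots> = ennreal (2 * C / (s + 1) * \<bar>h\<bar> powr (s + t + 1))"
    using assms by (simp add: ennreal_mult[symmetric] powr_add[symmetric] add_ac)
  finally show ?thesis .
qed

section \<open>Mixed differences of functions with power bounds\<close>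

lemma abs_diff_le_of_deriv_bound:
  fixes u u' :: "real \<Rightarrow> real"
  assumes "\<And>t. (u has_real_derivative u' t) (at t)"
    and "\<And>t. t \<in> closed_segment a b \<Longrightarrow> \<bar>u' t\<bar> \<le> M"
  shows "\<bar>u b - u a\<bar> \<le> M * \<bar>b - a\<bar>"
  using field_differentiable_bound[OF convex_closed_segment, of a b u u' M b a] assms
  by (auto intro: has_field_derivative_at_within)

lemma powr_le_2_of_half_le:
  fixes r s :: real
  assumes "1/2 \<le> r" "r \<le> 3/2" "\<bar>s\<bar> \<le> 1"
  shows "r powr s \<le> 2"
proof (cases "1 \<le> r")
  case True
  then have "r powr s \<le> r powr 1" using assms by (intro powr_mono) auto
  then show ?thesis using assms by simp
next
  case False
  then have "r powr s \<le> r powr (-1)" using assms by (intro powr_mono') (auto simp: abs_le_iff)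
  also have "\<dots> = 1 / r" using assms by (simp add: powr_minus_divide)
  also have "\<dots> \<le> 2" using assms by (simp add: divide_le_eq)
  finally show ?thesis .
qed

lemma powr_le_powr_mult_powr:
  fixes x y c a :: real
  assumes "0 < x" "x \<le> y" "a \<le> c"
  shows "x powr c \<le> x powr a * y powr (c - a)"
proof -
  have "x powr c = x powr a * x powr (c - a)" by (simp flip: powr_add)
  also have "\<dots> \<le> x powr a * y powr (c - a)" using assms by (intro mult_left_mono powr_mono2) auto
  finally show ?thesis .
qed

lemma mixed_difference_le_small_scale:
  fixes u u' :: "real \<Rightarrow> real" and K q h \<sigma> :: real
  assumes der: "\<And>t. (u has_real_derivative u' t) (at t)"
    and u_nonneg: "\<And>x. 0 \<le> u x" and u_le: "\<And>x. u x \<le> K * \<bar>x\<bar> powr q"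
    and du_le: "\<And>t. \<bar>u' t\<bar> \<le> K * \<bar>t\<bar> powr (q - 1)"
    and q: "1 \<le> q" and h\<sigma>: "\<bar>\<sigma>\<bar> \<le> \<bar>h\<bar>"
  shows "\<bar>u (h + \<sigma>) - u h - u \<sigma>\<bar> \<le> K * (2 powr (q - 1) + 1) * \<bar>\<sigma>\<bar> * \<bar>h\<bar> powr (q - 1)"
proof -
  have K: "0 \<le> K" using u_nonneg[of 1] u_le[of 1] by simp
  have "\<bar>u (h + \<sigma>) - u h\<bar> \<le> K * (2 * \<bar>h\<bar>) powr (q - 1) * \<bar>h + \<sigma> - h\<bar>"
  proof (rule abs_diff_le_of_deriv_bound[OF der])
    fix t assume "t \<in> closed_segment h (h + \<sigma>)"
    then have "\<bar>t - h\<bar> \<le> \<bar>\<sigma>\<bar>" using segment_bound1 by fastforce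
    then have "\<bar>t\<bar> powr (q - 1) \<le> (2 * \<bar>h\<bar>) powr (q - 1)" using h\<sigma> q by (intro powr_mono2) auto
    then show "\<bar>u' t\<bar> \<le> K * (2 * \<bar>h\<bar>) powr (q - 1)"
      using du_le[of t] K by (meson mult_left_mono order_trans)
  qed
  also have "\<dots> = K * 2 powr (q - 1) * \<bar>\<sigma>\<bar> * \<bar>h\<bar> powr (q - 1)"
    by (simp add: powr_mult)
  finally have diff: "\<bar>u (h + \<sigma>) - u h\<bar> \<le> K * 2 powr (q - 1) * \<bar>\<sigma>\<bar> * \<bar>h\<bar> powr (q - 1)" .
  have "u \<sigma> \<le> K * \<bar>\<sigma>\<bar> * \<bar>h\<bar> powr (q - 1)"
  proof (cases "\<sigma> = 0")
    case True
    then show ?thesis using u_le[of 0] q u_nonneg[of 0] by simp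
  next
    case False
    have "\<bar>\<sigma>\<bar> powr q \<le> \<bar>\<sigma>\<bar> powr 1 * \<bar>h\<bar> powr (q - 1)"
      using False h\<sigma> q by (intro powr_le_powr_mult_powr) auto
    then have "K * \<bar>\<sigma>\<bar> powr q \<le> K * (\<bar>\<sigma>\<bar> * \<bar>h\<bar> powr (q - 1))"
      using False K by (simp add: mult_left_mono)
    then show ?thesis using u_le[of \<sigma>] by (simp add: mult.assoc)
  qed
  moreover have "\<bar>u (h + \<sigma>) - u h - u \<sigma>\<bar> \<le> \<bar>u (h + \<sigma>) - u h\<bar> + u \<sigma>"
    using u_nonneg[of \<sigma>] by arith
  ultimately show ?thesis using diff by (simp add: algebra_simps)
qed

lemma abs_increment_le_of_deriv_powr:
  fixes u u' :: "real \<Rightarrow> real" and K p h \<sigma> :: real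
  assumes der: "\<And>t. (u has_real_derivative u' t) (at t)"
    and du_le: "\<And>t. t \<noteq> 0 \<Longrightarrow> \<bar>u' t\<bar> \<le> K * \<bar>t\<bar> powr (p - 1)"
    and K: "0 \<le> K" and p: "0 \<le> p" "p \<le> 2" and h\<sigma>: "2 * \<bar>\<sigma>\<bar> \<le> \<bar>h\<bar>"
  shows "\<bar>u (h + \<sigma>) - u h\<bar> \<le> 2 * K * \<bar>\<sigma>\<bar> * \<bar>h\<bar> powr (p - 1)"
proof (cases "h = 0")
  case False
  have "\<bar>u (h + \<sigma>) - u h\<bar> \<le> K * (2 * \<bar>h\<bar> powr (p - 1)) * \<bar>h + \<sigma> - h\<bar>"
  proof (rule abs_diff_le_of_deriv_bound[OF der])
    fix t assume "t \<in> closed_segment h (h + \<sigma>)"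
    then have "\<bar>t - h\<bar> \<le> \<bar>\<sigma>\<bar>" using segment_bound1 by fastforce
    then have t: "\<bar>h\<bar> / 2 \<le> \<bar>t\<bar>" "\<bar>t\<bar> \<le> 3 * \<bar>h\<bar> / 2" using h\<sigma> by auto
    have "(\<bar>t\<bar> / \<bar>h\<bar>) powr (p - 1) \<le> 2"
      using t False p by (intro powr_le_2_of_half_le) (auto simp: field_simps)
    then have "\<bar>t\<bar> powr (p - 1) \<le> 2 * \<bar>h\<bar> powr (p - 1)"
      using False by (simp add: powr_divide divide_le_eq)
    moreover have "t \<noteq> 0" using t False by auto
    ultimately show "\<bar>u' t\<bar> \<le> K * (2 * \<bar>h\<bar> powr (p - 1))"
      using du_le[of t] K by (meson mult_left_mono order_trans)
  qed
  then show ?thesis by (simp add: mult_ac)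
qed (use h\<sigma> in simp)

lemma powr_le_twice_powr_mult_powr:
  fixes h \<sigma> a p :: real
  assumes a: "0 < a" "a \<le> 1" and h\<sigma>: "\<bar>h\<bar> \<le> 2 * \<bar>\<sigma>\<bar>"
  shows "\<bar>h\<bar> powr p \<le> 2 * (\<bar>\<sigma>\<bar> powr a * \<bar>h\<bar> powr (p - a))"
proof -
  have "\<bar>h\<bar> powr a \<le> (2 * \<bar>\<sigma>\<bar>) powr a" using h\<sigma> a by (intro powr_mono2) auto
  also have "\<dots> = 2 powr a * \<bar>\<sigma>\<bar> powr a" by (simp add: powr_mult)
  also have "\<dots> \<le> 2 * \<bar>\<sigma>\<bar> powr a"
    using powr_mono[of a 1 2] a by (intro mult_right_mono) auto
  finally have "\<bar>h\<bar> powr a * \<bar>h\<bar> powr (p - a) \<le> 2 * \<bar>\<sigma>\<bar> powr a * \<bar>h\<bar> powr (p - a)"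
    by (intro mult_right_mono) auto
  then show ?thesis by (simp add: mult.assoc flip: powr_add)
qed

lemma mixed_difference_le_large_scale:
  fixes u u' :: "real \<Rightarrow> real" and K p a h \<sigma> :: real
  assumes der: "\<And>t. (u has_real_derivative u' t) (at t)"
    and u_nonneg: "\<And>x. 0 \<le> u x" and u_le: "\<And>x. u x \<le> K * \<bar>x\<bar> powr p"
    and du_le: "\<And>t. t \<noteq> 0 \<Longrightarrow> \<bar>u' t\<bar> \<le> K * \<bar>t\<bar> powr (p - 1)"
    and p: "0 < p" "p \<le> 2" and a: "0 < a" "a \<le> 1" "a \<le> p" and h\<sigma>: "\<bar>\<sigma>\<bar> \<le> \<bar>h\<bar>"
  shows "\<bar>u (h + \<sigma>) - u h - u \<sigma>\<bar> \<le> 12 * K * \<bar>\<sigma>\<bar> powr a * \<bar>h\<bar> powr (p - a)"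
proof (cases "\<sigma> = 0")
  case True
  then show ?thesis using u_le[of 0] p u_nonneg[of 0] by simp
next
  case \<sigma>: False
  have K: "0 \<le> K" using u_nonneg[of 1] u_le[of 1] by simp
  let ?B = "\<bar>\<sigma>\<bar> powr a * \<bar>h\<bar> powr (p - a)"
  have "\<bar>\<sigma>\<bar> powr p \<le> ?B" using \<sigma> h\<sigma> a by (intro powr_le_powr_mult_powr) auto
  then have u\<sigma>: "u \<sigma> \<le> K * ?B" using u_le[of \<sigma>] K by (meson mult_left_mono order_trans)
  show ?thesis
  proof (cases "2 * \<bar>\<sigma>\<bar> \<le> \<bar>h\<bar>")
    case True
    have "\<bar>\<sigma>\<bar> powr 1 * \<bar>h\<bar> powr (p - 1) \<le> (\<bar>\<sigma>\<bar> powr a * \<bar>h\<bar> powr (1 - a)) * \<bar>h\<bar> powr (p - 1)"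
      using \<sigma> h\<sigma> a by (intro mult_right_mono powr_le_powr_mult_powr) auto
    then have "\<bar>\<sigma>\<bar> * \<bar>h\<bar> powr (p - 1) \<le> ?B"
      using \<sigma> by (simp add: mult.assoc flip: powr_add)
    have "\<bar>u (h + \<sigma>) - u h\<bar> \<le> 2 * K * \<bar>\<sigma>\<bar> * \<bar>h\<bar> powr (p - 1)"
      by (rule abs_increment_le_of_deriv_powr[OF der du_le K less_imp_le[OF p(1)] p(2) True])
    also have "\<dots> \<le> 2 * K * ?B"
      using \<open>\<bar>\<sigma>\<bar> * \<bar>h\<bar> powr (p - 1) \<le> ?B\<close> K by (simp add: mult.assoc mult_left_mono)
    finally show ?thesis using u\<sigma> u_nonneg[of \<sigma>] K by (simp add: algebra_simps)
  next
    case False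
    then have hB: "\<bar>h\<bar> powr p \<le> 2 * ?B" using a by (intro powr_le_twice_powr_mult_powr) auto
    have "\<bar>h + \<sigma>\<bar> powr p \<le> (2 * \<bar>h\<bar>) powr p" using h\<sigma> p by (intro powr_mono2) auto
    also have "\<dots> = 2 powr p * \<bar>h\<bar> powr p" by (simp add: powr_mult)
    also have "\<dots> \<le> 4 * \<bar>h\<bar> powr p"
      using powr_mono[of p 2 2] p by (intro mult_right_mono) auto
    finally have "u (h + \<sigma>) \<le> K * (4 * \<bar>h\<bar> powr p)"
      using u_le[of "h + \<sigma>"] K by (meson mult_left_mono order_trans)
    moreover have "\<bar>\<sigma>\<bar> powr p \<le> \<bar>h\<bar> powr p" using h\<sigma> p by (intro powr_mono2) auto
    then have "u \<sigma> \<le> K * \<bar>h\<bar> powr p"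
      using u_le[of \<sigma>] K by (meson mult_left_mono order_trans)
    ultimately have "\<bar>u (h + \<sigma>) - u h - u \<sigma>\<bar> \<le> 6 * K * \<bar>h\<bar> powr p"
      using u_le[of h] u_nonneg[of h] u_nonneg[of \<sigma>] u_nonneg[of "h + \<sigma>"] by (simp add: abs_le_iff)
    also have "\<dots> \<le> 6 * K * (2 * ?B)" using hB K by (intro mult_left_mono) auto
    finally show ?thesis by (simp add: mult_ac)
  qed
qed

lemma power2_div_powr_le:
  fixes X C s r b h \<sigma> :: real
  assumes "\<bar>X\<bar> \<le> C * \<sigma> powr s * h powr r" "0 < \<sigma>" "0 < h"
  shows "X\<^sup>2 / (h powr b * \<sigma> powr b) \<le> C\<^sup>2 * \<sigma> powr (2 * s - b) * h powr (2 * r - b)"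
proof -
  have "X\<^sup>2 \<le> (C * \<sigma> powr s * h powr r)\<^sup>2"
    using assms(1) abs_ge_zero order_trans by (metis power2_abs power_mono)
  also have "\<dots> = C\<^sup>2 * (\<sigma> powr s)\<^sup>2 * (h powr r)\<^sup>2"
    by (simp add: power_mult_distrib)
  also have "\<dots> = C\<^sup>2 * \<sigma> powr (2 * s) * h powr (2 * r)"
    by (simp add: power2_eq_square flip: powr_add)
  finally have "X\<^sup>2 / (h powr b * \<sigma> powr b) \<le> C\<^sup>2 * \<sigma> powr (2 * s) * h powr (2 * r) / (h powr b * \<sigma> powr b)"
    using assms by (intro divide_right_mono) auto
  also have "\<dots> = C\<^sup>2 * \<sigma> powr (2 * s - b) * h powr (2 * r - b)"
    by (simp add: powr_diff)
  finally show ?thesis .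
qed

section \<open>Estimates for an admissible test function\<close>

lemma c_beta_pos:
  assumes "0 < \<beta>" "\<beta> < 2"
  shows "0 < c_beta \<beta>"
proof -
  have "Gamma (- \<beta> / 2) \<noteq> 0"
  proof
    assume "Gamma (- \<beta> / 2) = 0"
    then obtain n :: nat where "- \<beta> / 2 = - of_nat n"
      by (auto simp: Gamma_eq_zero_iff elim: nonpos_Ints_cases')
    then have "0 < real n" "real n < 1" using assms by auto
    then show False by simp
  qed
  moreover have "0 < Gamma ((1 + \<beta>) / 2)" using assms by (intro Gamma_real_pos) auto
  ultimately show ?thesis
    unfolding c_beta_def by (intro divide_pos_pos mult_pos_pos) auto
qed

lemma nn_integral_pair_lborel_pos:
  fixes f :: "real \<times> real \<Rightarrow> real"
  assumes [measurable]: "f \<in> borel_measurable (lborel \<Otimes>\<^sub>M lborel)"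
    and "a < b" "c < d" and pos: "\<And>x y. x \<in> {a<..<b} \<Longrightarrow> y \<in> {c<..<d} \<Longrightarrow> 0 < f (x, y)"
  shows "0 < (\<integral>\<^sup>+p. ennreal (f p) \<partial>(lborel \<Otimes>\<^sub>M lborel))"
proof (rule ccontr)
  assume "\<not> ?thesis"
  then have "AE p in lborel \<Otimes>\<^sub>M lborel. ennreal (f p) = 0"
    by (simp add: nn_integral_0_iff_AE)
  then obtain N where N: "{p \<in> space (lborel \<Otimes>\<^sub>M lborel). ennreal (f p) \<noteq> 0} \<subseteq> N"
      "emeasure (lborel \<Otimes>\<^sub>M lborel) N = 0" "N \<in> sets (lborel \<Otimes>\<^sub>M lborel)"
    by (auto elim: AE_E)
  have "{a<..<b} \<times> {c<..<d} \<subseteq> N"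
    using N(1) pos by (force simp: space_pair_measure)
  then have "emeasure (lborel \<Otimes>\<^sub>M lborel) ({a<..<b} \<times> {c<..<d}) \<le> 0"
    using N(2,3) emeasure_mono by metis
  then show False
    using assms(2,3) by (simp add: lborel.emeasure_pair_measure_Times ennreal_mult[symmetric])
qed

locale exponent_data =
  fixes \<beta> \<Lambda> \<delta> :: real
  assumes \<beta>_pos: "0 < \<beta>" and \<beta>_less_2: "\<beta> < 2" and \<Lambda>_pos: "0 < \<Lambda>" and \<delta>_pos: "0 < \<delta>"
    and one_less_\<beta>_\<delta>: "1 < \<beta> + \<delta>"
begin

abbreviation "q \<equiv> \<beta> + \<delta>"

text \<open>\<open>K \<ge> 2\<close> also dominates the derivative \<open>p |t|^(p-1)\<close> of \<open>|t|^p\<close>, since \<open>p < 2\<close>.\<close>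
definition "K = max \<Lambda> 2"
definition "\<eta> = min \<beta> (2 - \<beta>) / 4"
text \<open>\<open>\<alpha> > \<beta>/2\<close> makes \<open>|\<sigma>|^(2\<alpha>-1-\<beta>)\<close> integrable at \<open>0\<close>, and \<open>\<alpha> \<le> \<beta> - \<epsilon>\<close> once \<open>\<epsilon> \<le> \<beta>/4\<close>.\<close>
definition "\<alpha> = \<beta> / 2 + \<eta>"
definition "A_near = 2 * (K * (2 powr (q - 1) + 1))\<^sup>2 / (2 - \<beta>)"
definition "A_far = (12 * K)\<^sup>2 / \<eta>"
definition "C_Gamma = (c_beta \<beta>)\<^sup>2 * (2 * (A_near / \<delta> + A_far))"

lemma two_le_K: "2 \<le> K" and \<Lambda>_le_K: "\<Lambda> \<le> K"
  by (auto simp: K_def)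

lemma \<eta>_pos: "0 < \<eta>" and \<eta>_le: "\<eta> \<le> \<beta> / 4" "\<eta> \<le> (2 - \<beta>) / 4"
  using \<beta>_pos \<beta>_less_2 by (auto simp: \<eta>_def)

lemma \<alpha>_pos: "0 < \<alpha>" and \<alpha>_le_1: "\<alpha> \<le> 1"
  using \<eta>_pos \<eta>_le \<beta>_pos by (auto simp: \<alpha>_def)

lemma A_near_nonneg: "0 \<le> A_near" and A_far_pos: "0 < A_far"
  using \<beta>_less_2 \<eta>_pos two_le_K by (auto simp: A_near_def A_far_def)

lemma C_Gamma_pos: "0 < C_Gamma"
  using c_beta_pos[OF \<beta>_pos \<beta>_less_2] A_near_nonneg A_far_pos \<delta>_pos unfolding C_Gamma_def
  by (intro mult_pos_pos add_nonneg_pos divide_nonneg_pos) auto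

end

locale test_fun_data = exponent_data +
  fixes \<epsilon> :: real and u :: "real \<Rightarrow> real"
  assumes admissible: "admissible_eps \<beta> \<epsilon>" and test_fun: "test_fun \<beta> \<Lambda> \<delta> \<epsilon> u"
begin

abbreviation "p \<equiv> \<beta> - \<epsilon>"

lemma \<epsilon>_pos: "0 < \<epsilon>" and \<epsilon>_less: "\<epsilon> < \<beta> / 2"
  using admissible by (auto simp: admissible_eps_def)

lemma p_pos: "0 < p" and p_less_2: "p < 2" and p_less_q: "p < q" and one_less_q: "1 < q"
  using \<epsilon>_pos \<epsilon>_less \<beta>_pos \<beta>_less_2 \<delta>_pos one_less_\<beta>_\<delta> by auto

text \<open>This is the only place where the condition \<open>\<epsilon> < (\<beta> - 1) / 2\<close> for \<open>\<beta> > 1\<close> enters.\<close>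
lemma p_neq_1: "p \<noteq> 1"
  using admissible \<beta>_pos by (auto simp: admissible_eps_def)

lemma u_outside: "1 \<le> \<bar>x\<bar> \<Longrightarrow> u x = \<bar>x\<bar> powr p"
  and u_inside: "\<bar>x\<bar> \<le> 1 \<Longrightarrow> 0 \<le> u x \<and> u x \<le> \<Lambda> * \<bar>x\<bar> powr q"
  and deriv_inside: "\<bar>x\<bar> \<le> 1 \<Longrightarrow> \<bar>deriv u x\<bar> \<le> \<Lambda> * \<bar>x\<bar> powr (q - 1)"
  and u_even: "u (- x) = u x"
  using test_fun by (auto simp: test_fun_def)

lemma has_real_derivative_u: "(u has_real_derivative deriv u x) (at x)"
proof -
  obtain D where "\<And>x. (u has_vector_derivative D x) (at x)"
    using test_fun by (auto simp: test_fun_def C1_differentiable_on_def)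
  then have "(u has_real_derivative D x) (at x)"
    by (simp add: has_real_derivative_iff_has_vector_derivative)
  then show ?thesis by (simp add: DERIV_imp_deriv)
qed

lemma isCont_u: "isCont u x"
  using has_real_derivative_u by (rule DERIV_isCont)

lemma u_measurable [measurable]: "u \<in> borel_measurable borel"
  using isCont_u by (intro borel_measurable_continuous_onI continuous_at_imp_continuous_on) auto

lemma u_zero: "u 0 = 0"
  using u_inside[of 0] one_less_q by auto

lemma u_nonneg: "0 \<le> u x"
  using u_inside[of x] u_outside[of x] by (cases "\<bar>x\<bar> \<le> 1") auto

lemma u_le_q: "u x \<le> K * \<bar>x\<bar> powr q"
proof (cases "\<bar>x\<bar> \<le> 1")
  case True
  then show ?thesis using u_inside[of x] \<Lambda>_le_K by (meson mult_right_mono order_trans powr_ge_zero)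
next
  case False
  then have "u x = \<bar>x\<bar> powr p" using u_outside by auto
  also have "\<dots> \<le> \<bar>x\<bar> powr q" using False p_less_q by (intro powr_mono) auto
  also have "\<dots> \<le> K * \<bar>x\<bar> powr q" using two_le_K by (intro mult_le_cancel_right1[THEN iffD2]) auto
  finally show ?thesis .
qed

lemma u_le_p: "u x \<le> K * \<bar>x\<bar> powr p"
proof (cases "\<bar>x\<bar> \<le> 1")
  case True
  then have "u x \<le> \<Lambda> * \<bar>x\<bar> powr q" using u_inside by auto
  also have "\<dots> \<le> K * \<bar>x\<bar> powr p"
  proof (cases "x = 0")
    case False
    then have "\<bar>x\<bar> powr q \<le> \<bar>x\<bar> powr p" using True p_less_q by (intro powr_mono') auto
    then show ?thesis using \<Lambda>_le_K two_le_K by (intro mult_mono) auto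
  qed simp
  finally show ?thesis .
next
  case False
  then have "u x = \<bar>x\<bar> powr p" using u_outside by auto
  also have "\<dots> \<le> K * \<bar>x\<bar> powr p" using two_le_K by (intro mult_le_cancel_right1[THEN iffD2]) auto
  finally show ?thesis .
qed

lemma deriv_outside:
  assumes "1 < \<bar>t\<bar>"
  shows "\<bar>deriv u t\<bar> = p * \<bar>t\<bar> powr (p - 1)"
proof (cases "1 < t")
  case True
  have "((\<lambda>y. y powr p) has_real_derivative p * t powr (p - 1)) (at t)"
    using True by (intro has_real_derivative_powr) auto
  then have "(u has_real_derivative p * t powr (p - 1)) (at t)"
    by (rule has_field_derivative_transform_within_open[where S="{1<..}"]) (use True u_outside in auto)
  then show ?thesis using True p_pos by (simp add: DERIV_imp_deriv)
next
  case False
  then have t: "t < -1" using assms by auto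
  have "((\<lambda>y. (- y) powr p) has_real_derivative p * (- t) powr (p - 1) * (- 1)) (at t)"
    using t by (auto intro!: derivative_eq_intros)
  then have "(u has_real_derivative p * (- t) powr (p - 1) * (- 1)) (at t)"
    by (rule has_field_derivative_transform_within_open[where S="{..<-1}"]) (use t u_outside in auto)
  then show ?thesis using t p_pos by (simp add: DERIV_imp_deriv)
qed

lemma deriv_le_q: "\<bar>deriv u t\<bar> \<le> K * \<bar>t\<bar> powr (q - 1)"
proof (cases "\<bar>t\<bar> \<le> 1")
  case True
  then show ?thesis using deriv_inside[of t] \<Lambda>_le_K by (meson mult_right_mono order_trans powr_ge_zero)
next
  case False
  then have "\<bar>deriv u t\<bar> = p * \<bar>t\<bar> powr (p - 1)" using deriv_outside by auto
  also have "\<dots> \<le> K * \<bar>t\<bar> powr (q - 1)"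
    using False p_less_q p_less_2 two_le_K p_pos by (intro mult_mono powr_mono) auto
  finally show ?thesis .
qed

lemma deriv_le_p: "t \<noteq> 0 \<Longrightarrow> \<bar>deriv u t\<bar> \<le> K * \<bar>t\<bar> powr (p - 1)"
proof (cases "\<bar>t\<bar> \<le> 1")
  case True
  assume "t \<noteq> 0"
  with True have "\<bar>deriv u t\<bar> \<le> \<Lambda> * \<bar>t\<bar> powr (q - 1)" using deriv_inside by auto
  also have "\<dots> \<le> K * \<bar>t\<bar> powr (p - 1)"
    using True p_less_q \<open>t \<noteq> 0\<close> \<Lambda>_le_K \<Lambda>_pos by (intro mult_mono powr_mono') auto
  finally show ?thesis .
next
  case False
  then have "\<bar>deriv u t\<bar> = p * \<bar>t\<bar> powr (p - 1)" using deriv_outside by auto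
  also have "\<dots> \<le> K * \<bar>t\<bar> powr (p - 1)"
    using p_less_2 two_le_K by (intro mult_right_mono) auto
  finally show ?thesis .
qed

lemma mixed_difference_le_near:
  "\<bar>\<sigma>\<bar> \<le> \<bar>h\<bar> \<Longrightarrow> \<bar>u (h + \<sigma>) - u h - u \<sigma>\<bar> \<le> K * (2 powr (q - 1) + 1) * \<bar>\<sigma>\<bar> * \<bar>h\<bar> powr (q - 1)"
  using one_less_q
  by (intro mixed_difference_le_small_scale[OF has_real_derivative_u u_nonneg u_le_q deriv_le_q]) auto

lemma mixed_difference_le_far:
  "\<epsilon> \<le> \<beta> / 4 \<Longrightarrow> \<bar>\<sigma>\<bar> \<le> \<bar>h\<bar> \<Longrightarrow> \<bar>u (h + \<sigma>) - u h - u \<sigma>\<bar> \<le> 12 * K * \<bar>\<sigma>\<bar> powr \<alpha> * \<bar>h\<bar> powr (p - \<alpha>)"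
  using p_pos p_less_2 \<alpha>_pos \<alpha>_le_1 \<eta>_le
  by (intro mixed_difference_le_large_scale[OF has_real_derivative_u u_nonneg u_le_p deriv_le_p])
    (auto simp: \<alpha>_def)

lemma G2_integrand_at_0:
  "G2_integrand \<beta> u 0 (h, \<sigma>) = (u (h + \<sigma>) - u h - u \<sigma>)\<^sup>2 / (\<bar>h\<bar> powr (1 + \<beta>) * \<bar>\<sigma>\<bar> powr (1 + \<beta>))"
  by (simp add: G2_integrand_def u_zero)

lemma G2_integrand_nonneg: "0 \<le> G2_integrand \<beta> u 0 z"
  by (simp add: G2_integrand_def split: prod.split)

lemma G2_integrand_measurable [measurable]: "G2_integrand \<beta> u 0 \<in> borel_measurable (lborel \<Otimes>\<^sub>M lborel)"
  unfolding G2_integrand_def by measurable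

definition "cone_bound h \<sigma> = (if \<bar>\<sigma>\<bar> \<le> \<bar>h\<bar> then 1 else 0) *
   (if \<bar>h\<bar> \<le> 1 then (K * (2 powr (q - 1) + 1))\<^sup>2 * \<bar>\<sigma>\<bar> powr (1 - \<beta>) * \<bar>h\<bar> powr (2 * q - 3 - \<beta>)
    else (12 * K)\<^sup>2 * \<bar>\<sigma>\<bar> powr (2 * \<alpha> - 1 - \<beta>) * \<bar>h\<bar> powr (2 * p - 2 * \<alpha> - 1 - \<beta>))"

lemma cone_bound_nonneg: "0 \<le> cone_bound h \<sigma>"
  by (simp add: cone_bound_def)

lemma cone_bound_measurable [measurable]:
  "(\<lambda>z. cone_bound (fst z) (snd z)) \<in> borel_measurable (lborel \<Otimes>\<^sub>M lborel)"
  unfolding cone_bound_def by measurable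

lemma cone_bound_swap_measurable [measurable]:
  "(\<lambda>z. cone_bound (snd z) (fst z)) \<in> borel_measurable (lborel \<Otimes>\<^sub>M lborel)"
  unfolding cone_bound_def by measurable

lemma G2_integrand_le_cone_bound:
  assumes \<epsilon>: "\<epsilon> \<le> \<beta> / 4" and h\<sigma>: "\<bar>\<sigma>\<bar> \<le> \<bar>h\<bar>"
  shows "G2_integrand \<beta> u 0 (h, \<sigma>) \<le> cone_bound h \<sigma>"
proof (cases "\<sigma> = 0")
  case True
  then show ?thesis by (simp add: G2_integrand_def cone_bound_nonneg)
next
  case False
  then have pos: "0 < \<bar>\<sigma>\<bar>" "0 < \<bar>h\<bar>" using h\<sigma> by auto
  show ?thesis
  proof (cases "\<bar>h\<bar> \<le> 1")
    case True
    have "\<bar>u (h + \<sigma>) - u h - u \<sigma>\<bar> \<le> K * (2 powr (q - 1) + 1) * \<bar>\<sigma>\<bar> powr 1 * \<bar>h\<bar> powr (q - 1)"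
      using mixed_difference_le_near[OF h\<sigma>] False by simp
    then have "G2_integrand \<beta> u 0 (h, \<sigma>) \<le> (K * (2 powr (q - 1) + 1))\<^sup>2
        * \<bar>\<sigma>\<bar> powr (2 * 1 - (1 + \<beta>)) * \<bar>h\<bar> powr (2 * (q - 1) - (1 + \<beta>))"
      unfolding G2_integrand_at_0 using pos by (rule power2_div_powr_le)
    also have "\<dots> = (K * (2 powr (q - 1) + 1))\<^sup>2 * \<bar>\<sigma>\<bar> powr (1 - \<beta>) * \<bar>h\<bar> powr (2 * q - 3 - \<beta>)"
      by (simp add: algebra_simps)
    finally show ?thesis using True h\<sigma> by (simp add: cone_bound_def)
  next
    case False
    have "G2_integrand \<beta> u 0 (h, \<sigma>) \<le> (12 * K)\<^sup>2
        * \<bar>\<sigma>\<bar> powr (2 * \<alpha> - (1 + \<beta>)) * \<bar>h\<bar> powr (2 * (p - \<alpha>) - (1 + \<beta>))"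
      unfolding G2_integrand_at_0 using mixed_difference_le_far[OF \<epsilon> h\<sigma>] pos
      by (rule power2_div_powr_le)
    also have "\<dots> = (12 * K)\<^sup>2 * \<bar>\<sigma>\<bar> powr (2 * \<alpha> - 1 - \<beta>) * \<bar>h\<bar> powr (2 * p - 2 * \<alpha> - 1 - \<beta>)"
      by (simp add: algebra_simps)
    finally show ?thesis using False h\<sigma> by (simp add: cone_bound_def)
  qed
qed

lemma G2_integrand_swap: "G2_integrand \<beta> u 0 (h, \<sigma>) = G2_integrand \<beta> u 0 (\<sigma>, h)"
  by (simp add: G2_integrand_at_0 algebra_simps)

lemma G2_integrand_le_sum_cone_bound:
  "\<epsilon> \<le> \<beta> / 4 \<Longrightarrow> G2_integrand \<beta> u 0 (h, \<sigma>) \<le> cone_bound h \<sigma> + cone_bound \<sigma> h"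
  using G2_integrand_le_cone_bound[of h \<sigma>] G2_integrand_le_cone_bound[of \<sigma> h] G2_integrand_swap[of h \<sigma>]
    cone_bound_nonneg[of h \<sigma>] cone_bound_nonneg[of \<sigma> h]
  by (cases "\<bar>\<sigma>\<bar> \<le> \<bar>h\<bar>") auto

lemma nn_integral_cone_bound:
  "(\<integral>\<^sup>+\<sigma>. ennreal (cone_bound h \<sigma>) \<partial>lborel)
     \<le> ennreal (if \<bar>h\<bar> \<le> 1 then A_near * \<bar>h\<bar> powr (2 * \<delta> - 1) else A_far * \<bar>h\<bar> powr (-1 - 2 * \<epsilon>))"
proof (cases "\<bar>h\<bar> \<le> 1")
  case True
  then have "(\<integral>\<^sup>+\<sigma>. ennreal (cone_bound h \<sigma>) \<partial>lborel)
     = (\<integral>\<^sup>+\<sigma>. ennreal (if \<bar>\<sigma>\<bar> \<le> \<bar>h\<bar> then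
          (K * (2 powr (q - 1) + 1))\<^sup>2 * \<bar>\<sigma>\<bar> powr (1 - \<beta>) * \<bar>h\<bar> powr (2 * q - 3 - \<beta>) else 0) \<partial>lborel)"
    by (intro nn_integral_cong) (simp add: cone_bound_def)
  also have "\<dots> \<le> ennreal (2 * (K * (2 powr (q - 1) + 1))\<^sup>2 / (1 - \<beta> + 1)
                     * \<bar>h\<bar> powr (1 - \<beta> + (2 * q - 3 - \<beta>) + 1))"
    using \<beta>_less_2 by (intro nn_integral_cone_powr_le) auto
  finally show ?thesis
    using True by (simp add: A_near_def algebra_simps)
next
  case False
  then have "(\<integral>\<^sup>+\<sigma>. ennreal (cone_bound h \<sigma>) \<partial>lborel)
     = (\<integral>\<^sup>+\<sigma>. ennreal (if \<bar>\<sigma>\<bar> \<le> \<bar>h\<bar> then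
          (12 * K)\<^sup>2 * \<bar>\<sigma>\<bar> powr (2 * \<alpha> - 1 - \<beta>) * \<bar>h\<bar> powr (2 * p - 2 * \<alpha> - 1 - \<beta>) else 0) \<partial>lborel)"
    by (intro nn_integral_cong) (simp add: cone_bound_def)
  also have "\<dots> \<le> ennreal (2 * (12 * K)\<^sup>2 / (2 * \<alpha> - 1 - \<beta> + 1)
                     * \<bar>h\<bar> powr (2 * \<alpha> - 1 - \<beta> + (2 * p - 2 * \<alpha> - 1 - \<beta>) + 1))"
    using \<eta>_pos by (intro nn_integral_cone_powr_le) (auto simp: \<alpha>_def)
  finally show ?thesis
    using False \<eta>_pos by (simp add: A_far_def \<alpha>_def algebra_simps)
qed

lemma nn_integral_nn_integral_cone_bound_le:
  "(\<integral>\<^sup>+h. \<integral>\<^sup>+\<sigma>. ennreal (cone_bound h \<sigma>) \<partial>lborel \<partial>lborel) \<le> ennreal (A_near / \<delta> + A_far / \<epsilon>)"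
proof -
  have "(\<integral>\<^sup>+h. \<integral>\<^sup>+\<sigma>. ennreal (cone_bound h \<sigma>) \<partial>lborel \<partial>lborel)
      \<le> (\<integral>\<^sup>+h. ennreal (if \<bar>h\<bar> \<le> 1 then A_near * \<bar>h\<bar> powr (2 * \<delta> - 1)
                           else A_far * \<bar>h\<bar> powr (-1 - 2 * \<epsilon>)) \<partial>lborel)"
    by (intro nn_integral_mono nn_integral_cone_bound)
  also have "\<dots> \<le> ennreal (2 * A_near / (2 * \<delta>) + 2 * A_far / (2 * \<epsilon>))"
    using \<delta>_pos \<epsilon>_pos A_near_nonneg A_far_pos by (intro nn_integral_two_scale_powr_le) auto
  also have "\<dots> = ennreal (A_near / \<delta> + A_far / \<epsilon>)"
    by simp
  finally show ?thesis .
qed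

lemma nn_integral_G2_integrand_le:
  assumes "\<epsilon> \<le> \<beta> / 4"
  shows "(\<integral>\<^sup>+z. ennreal (G2_integrand \<beta> u 0 z) \<partial>(lborel \<Otimes>\<^sub>M lborel)) \<le> ennreal (2 * (A_near / \<delta> + A_far / \<epsilon>))"
proof -
  let ?I = "\<integral>\<^sup>+h. \<integral>\<^sup>+\<sigma>. ennreal (cone_bound h \<sigma>) \<partial>lborel \<partial>lborel"
  have pointwise: "ennreal (G2_integrand \<beta> u 0 z)
      \<le> ennreal (cone_bound (fst z) (snd z)) + ennreal (cone_bound (snd z) (fst z))" for z
  proof -
    obtain h \<sigma> where z: "z = (h, \<sigma>)" by (cases z)
    have "ennreal (G2_integrand \<beta> u 0 (h, \<sigma>)) \<le> ennreal (cone_bound h \<sigma> + cone_bound \<sigma> h)"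
      using G2_integrand_le_sum_cone_bound[OF assms] by (rule ennreal_leI)
    then show ?thesis using cone_bound_nonneg by (simp add: z)
  qed
  have "(\<integral>\<^sup>+z. ennreal (G2_integrand \<beta> u 0 z) \<partial>(lborel \<Otimes>\<^sub>M lborel))
     \<le> (\<integral>\<^sup>+z. ennreal (cone_bound (fst z) (snd z)) + ennreal (cone_bound (snd z) (fst z)) \<partial>(lborel \<Otimes>\<^sub>M lborel))"
    using pointwise by (rule nn_integral_mono)
  also have "\<dots> = (\<integral>\<^sup>+z. ennreal (cone_bound (fst z) (snd z)) \<partial>(lborel \<Otimes>\<^sub>M lborel))
                + (\<integral>\<^sup>+z. ennreal (cone_bound (snd z) (fst z)) \<partial>(lborel \<Otimes>\<^sub>M lborel))"
    by (rule nn_integral_add) measurable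
  also have "(\<integral>\<^sup>+z. ennreal (cone_bound (fst z) (snd z)) \<partial>(lborel \<Otimes>\<^sub>M lborel)) = ?I"
    by (subst lborel.nn_integral_fst[symmetric]) auto
  also have "(\<integral>\<^sup>+z. ennreal (cone_bound (snd z) (fst z)) \<partial>(lborel \<Otimes>\<^sub>M lborel)) = ?I"
    by (subst pair_sigma_finite.nn_integral_snd[symmetric])
      (auto simp: pair_sigma_finite_def lborel.sigma_finite_measure_axioms)
  also have "?I + ?I \<le> ennreal (A_near / \<delta> + A_far / \<epsilon>) + ennreal (A_near / \<delta> + A_far / \<epsilon>)"
    by (rule add_mono[OF nn_integral_nn_integral_cone_bound_le nn_integral_nn_integral_cone_bound_le])
  also have "\<dots> = ennreal (2 * (A_near / \<delta> + A_far / \<epsilon>))"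
  proof -
    have "0 \<le> A_near / \<delta> + A_far / \<epsilon>"
      using A_near_nonneg A_far_pos \<delta>_pos \<epsilon>_pos by (intro add_nonneg_nonneg divide_nonneg_pos) auto
    then show ?thesis by (simp only: mult_2 ennreal_plus)
  qed
  finally show ?thesis .
qed

lemma mixed_difference_2_2_neq_0: "u 4 - 2 * u 2 \<noteq> 0"
proof -
  have "u 4 - 2 * u 2 = 2 powr p * (2 powr p - 2)"
    using powr_mult[of 2 2 p] by (simp add: u_outside algebra_simps)
  moreover have "2 powr p \<noteq> 2 powr 1"
    using p_neq_1 by (subst powr_inj) auto
  ultimately show ?thesis by simp
qed

lemma nn_integral_G2_integrand_pos: "0 < (\<integral>\<^sup>+z. ennreal (G2_integrand \<beta> u 0 z) \<partial>(lborel \<Otimes>\<^sub>M lborel))"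
proof -
  define e where "e = \<bar>u 4 - 2 * u 2\<bar> / 3"
  have e: "0 < e" using mixed_difference_2_2_neq_0 by (simp add: e_def)
  obtain d4 where d4: "0 < d4" "\<And>x. dist x 4 < d4 \<Longrightarrow> dist (u x) (u 4) < e"
    using isCont_u[of 4] e unfolding continuous_at_eps_delta by blast
  obtain d2 where d2: "0 < d2" "\<And>x. dist x 2 < d2 \<Longrightarrow> dist (u x) (u 2) < e"
    using isCont_u[of 2] e unfolding continuous_at_eps_delta by blast
  define d where "d = min d4 d2 / 2"
  have d: "0 < d" using d4 d2 by (simp add: d_def)
  show ?thesis
  proof (rule nn_integral_pair_lborel_pos)
    fix h \<sigma> assume h\<sigma>: "h \<in> {2<..<2 + d}" "\<sigma> \<in> {2<..<2 + d}"
    then have "\<bar>u (h + \<sigma>) - u 4\<bar> < e" "\<bar>u h - u 2\<bar> < e" "\<bar>u \<sigma> - u 2\<bar> < e"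
      using d4(2)[of "h + \<sigma>"] d2(2)[of h] d2(2)[of \<sigma>] by (auto simp: dist_real_def d_def)
    then have "u (h + \<sigma>) - u h - u \<sigma> \<noteq> 0"
      unfolding e_def by (simp add: abs_less_iff abs_if split: if_splits)
    moreover have "h \<noteq> 0" "\<sigma> \<noteq> 0" using h\<sigma> by auto
    ultimately show "0 < G2_integrand \<beta> u 0 (h, \<sigma>)" by (simp add: G2_integrand_at_0)
  qed (use d in auto)
qed

lemma L_integrand_at_0: "L_integrand \<beta> u 0 h = 2 * u h / \<bar>h\<bar> powr (1 + \<beta>)"
  by (simp add: L_integrand_def u_zero u_even[of h, symmetric])

lemma L_integrand_nonneg: "0 \<le> L_integrand \<beta> u 0 h"
  using u_nonneg[of h] by (simp add: L_integrand_at_0)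

lemma L_integrand_measurable [measurable]: "L_integrand \<beta> u 0 \<in> borel_measurable lborel"
  unfolding L_integrand_def by measurable

lemma L_integrand_le_powr:
  assumes "u h \<le> K * \<bar>h\<bar> powr r"
  shows "L_integrand \<beta> u 0 h \<le> 2 * K * \<bar>h\<bar> powr (r - (1 + \<beta>))"
proof -
  have "L_integrand \<beta> u 0 h \<le> 2 * (K * \<bar>h\<bar> powr r) / \<bar>h\<bar> powr (1 + \<beta>)"
    unfolding L_integrand_at_0 using assms by (intro divide_right_mono mult_left_mono) auto
  then show ?thesis by (simp add: powr_diff)
qed

lemma L_integrand_le:
  "L_integrand \<beta> u 0 h \<le> (if \<bar>h\<bar> \<le> 1 then 2 * K * \<bar>h\<bar> powr (\<delta> - 1) else 2 * K * \<bar>h\<bar> powr (-1 - \<epsilon>))"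
  using L_integrand_le_powr[OF u_le_q, of h] L_integrand_le_powr[OF u_le_p, of h]
  by (simp add: algebra_simps)

lemma L_integrand_ge: "2 * (indicator {1..} \<bar>h\<bar> * \<bar>h\<bar> powr (-1 - \<epsilon>)) \<le> L_integrand \<beta> u 0 h"
proof (cases "1 \<le> \<bar>h\<bar>")
  case True
  then have "L_integrand \<beta> u 0 h = 2 * (\<bar>h\<bar> powr p / \<bar>h\<bar> powr (1 + \<beta>))"
    by (simp add: L_integrand_at_0 u_outside)
  also have "\<bar>h\<bar> powr p / \<bar>h\<bar> powr (1 + \<beta>) = \<bar>h\<bar> powr (-1 - \<epsilon>)"
    by (simp add: powr_diff[symmetric] algebra_simps)
  finally show ?thesis using True by simp
qed (use L_integrand_nonneg[of h] in simp)

lemma nn_integral_L_integrand_le: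
  "(\<integral>\<^sup>+h. ennreal (L_integrand \<beta> u 0 h) \<partial>lborel) \<le> ennreal (4 * K / \<delta> + 4 * K / \<epsilon>)"
proof -
  have "(\<integral>\<^sup>+h. ennreal (L_integrand \<beta> u 0 h) \<partial>lborel)
      \<le> (\<integral>\<^sup>+h. ennreal (if \<bar>h\<bar> \<le> 1 then 2 * K * \<bar>h\<bar> powr (\<delta> - 1) else 2 * K * \<bar>h\<bar> powr (-1 - \<epsilon>)) \<partial>lborel)"
    by (intro nn_integral_mono ennreal_leI L_integrand_le)
  also have "\<dots> \<le> ennreal (2 * (2 * K) / \<delta> + 2 * (2 * K) / \<epsilon>)"
    using \<delta>_pos \<epsilon>_pos two_le_K by (intro nn_integral_two_scale_powr_le) auto
  finally show ?thesis by simp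
qed

lemma integrable_L_integrand: "integrable lborel (L_integrand \<beta> u 0)"
  using nn_integral_L_integrand_le L_integrand_nonneg
  by (intro integrableI_nonneg) (auto simp: order_le_less_trans)

lemma integral_L_integrand_ge: "2 / \<epsilon> \<le> (\<integral>h. L_integrand \<beta> u 0 h \<partial>lborel)"
proof -
  have "ennreal (2 / \<epsilon>) = 2 * ennreal (1 / (- (-1 - \<epsilon>) - 1))"
    using \<epsilon>_pos by (simp add: ennreal_mult' divide_inverse)
  also have "\<dots> \<le> 2 * (\<integral>\<^sup>+h. ennreal (indicator {1..} \<bar>h\<bar> * \<bar>h\<bar> powr (-1 - \<epsilon>)) \<partial>lborel)"
    using \<epsilon>_pos by (intro mult_left_mono nn_integral_abs_powr_outside_ge) auto
  also have "\<dots> = (\<integral>\<^sup>+h. ennreal (2 * (indicator {1..} \<bar>h\<bar> * \<bar>h\<bar> powr (-1 - \<epsilon>))) \<partial>lborel)"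
    by (subst nn_integral_cmult[symmetric]) (auto intro!: nn_integral_cong simp: ennreal_mult)
  also have "\<dots> \<le> (\<integral>\<^sup>+h. ennreal (L_integrand \<beta> u 0 h) \<partial>lborel)"
    by (intro nn_integral_mono ennreal_leI L_integrand_ge)
  also have "\<dots> = ennreal (\<integral>h. L_integrand \<beta> u 0 h \<partial>lborel)"
    using integrable_L_integrand L_integrand_nonneg by (intro nn_integral_eq_integral) auto
  finally show ?thesis
    using \<epsilon>_pos by (simp add: ennreal_le_iff2)
qed

lemma frac_L_ge: "2 * c_beta \<beta> / \<epsilon> \<le> frac_L \<beta> u 0"
proof -
  have "c_beta \<beta> * (2 / \<epsilon>) \<le> frac_L \<beta> u 0"
    unfolding frac_L_def using integral_L_integrand_ge c_beta_pos[OF \<beta>_pos \<beta>_less_2]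
    by (intro mult_left_mono) auto
  then show ?thesis by (simp add: mult.commute)
qed

lemma integrable_G2_integrand: "\<epsilon> \<le> \<beta> / 4 \<Longrightarrow> integrable (lborel \<Otimes>\<^sub>M lborel) (G2_integrand \<beta> u 0)"
  using nn_integral_G2_integrand_le G2_integrand_nonneg
  by (intro integrableI_nonneg) (auto simp: order_le_less_trans)

lemma integral_G2_integrand_eq:
  "(\<integral>z. G2_integrand \<beta> u 0 z \<partial>(lborel \<Otimes>\<^sub>M lborel))
     = enn2real (\<integral>\<^sup>+z. ennreal (G2_integrand \<beta> u 0 z) \<partial>(lborel \<Otimes>\<^sub>M lborel))"
  using G2_integrand_nonneg by (intro integral_eq_nn_integral) auto

lemma Gamma2_pos: "\<epsilon> \<le> \<beta> / 4 \<Longrightarrow> 0 < Gamma2 \<beta> u 0"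
  using nn_integral_G2_integrand_pos nn_integral_G2_integrand_le c_beta_pos[OF \<beta>_pos \<beta>_less_2]
  by (auto simp: Gamma2_def integral_G2_integrand_eq enn2real_positive_iff order_le_less_trans)

lemma Gamma2_le:
  assumes "\<epsilon> \<le> \<beta> / 4" "\<epsilon> < 1"
  shows "Gamma2 \<beta> u 0 \<le> C_Gamma / \<epsilon>"
proof -
  have "(\<integral>z. G2_integrand \<beta> u 0 z \<partial>(lborel \<Otimes>\<^sub>M lborel)) \<le> 2 * (A_near / \<delta> + A_far / \<epsilon>)"
    unfolding integral_G2_integrand_eq using nn_integral_G2_integrand_le[OF assms(1)]
      A_near_nonneg A_far_pos \<delta>_pos \<epsilon>_pos
    by (intro enn2real_leI) auto
  also have "\<dots> \<le> 2 * ((A_near / \<delta> + A_far) / \<epsilon>)"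
  proof -
    have "A_near / \<delta> * \<epsilon> \<le> A_near / \<delta>"
      using assms(2) A_near_nonneg \<delta>_pos \<epsilon>_pos by (intro mult_right_le_one_le) auto
    then have "A_near / \<delta> \<le> A_near / \<delta> / \<epsilon>"
      by (subst pos_le_divide_eq[OF \<epsilon>_pos])
    then show ?thesis
      by (simp add: add_divide_distrib)
  qed
  finally have "Gamma2 \<beta> u 0 \<le> (c_beta \<beta>)\<^sup>2 * (2 * ((A_near / \<delta> + A_far) / \<epsilon>))"
    unfolding Gamma2_def by (rule mult_left_mono) simp
  then show ?thesis
    by (simp add: C_Gamma_def)
qed

end

section \<open>An explicit admissible test function\<close>

text \<open>The quadratic piece is the polynomial in \<open>t = x\<^sup>2\<close> that vanishes at \<open>0\<close> and agrees with
  \<open>t powr (p/2)\<close> to first order at \<open>t = 1\<close>.\<close>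
definition glue_profile :: "real \<Rightarrow> real \<Rightarrow> real" where
  "glue_profile p t = (if t < 1 then (4 - p) / 2 * t + (p - 2) / 2 * t\<^sup>2 else t powr (p / 2))"

definition glue_profile_deriv :: "real \<Rightarrow> real \<Rightarrow> real" where
  "glue_profile_deriv p t = (if t < 1 then (4 - p) / 2 + (p - 2) * t else p / 2 * t powr (p / 2 - 1))"

definition example_fun :: "real \<Rightarrow> real \<Rightarrow> real" where
  "example_fun p x = glue_profile p (x\<^sup>2)"

lemma has_vector_derivative_glue_profile:
  "(glue_profile p has_vector_derivative glue_profile_deriv p t) (at t)"
proof -
  have "((\<lambda>t. if t \<in> {..<1} then (4 - p) / 2 * t + (p - 2) / 2 * t\<^sup>2 else t powr (p / 2))
      has_vector_derivative (if t \<in> {..<1} then (4 - p) / 2 + (p - 2) * t else p / 2 * t powr (p / 2 - 1)))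
      (at t within UNIV)"
  proof (rule has_vector_derivative_If_within_closures[where T = "{1..}"])
    have "((\<lambda>t. (4 - p) / 2 * t + (p - 2) / 2 * t\<^sup>2) has_real_derivative (4 - p) / 2 + (p - 2) * t) (at t)"
      by (auto intro!: derivative_eq_intros)
    then show "((\<lambda>t. (4 - p) / 2 * t + (p - 2) / 2 * t\<^sup>2) has_vector_derivative (4 - p) / 2 + (p - 2) * t)
        (at t within {..<1} \<union> closure {..<1} \<inter> closure {1..})"
      by (simp add: has_real_derivative_iff_has_vector_derivative has_vector_derivative_at_within)
  next
    assume "t \<in> {1..} \<union> closure {..<1} \<inter> closure {1..}"
    then have "((\<lambda>t. t powr (p / 2)) has_real_derivative p / 2 * t powr (p / 2 - 1)) (at t)"
      by (intro has_real_derivative_powr) auto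
    then show "((\<lambda>t. t powr (p / 2)) has_vector_derivative p / 2 * t powr (p / 2 - 1))
        (at t within {1..} \<union> closure {..<1} \<inter> closure {1..})"
      by (simp add: has_real_derivative_iff_has_vector_derivative has_vector_derivative_at_within)
  next
    assume "t \<in> closure {..<1}" "t \<in> closure {1..}"
    then have "t = 1" by auto
    then show "(4 - p) / 2 * t + (p - 2) / 2 * t\<^sup>2 = t powr (p / 2)"
      and "(4 - p) / 2 + (p - 2) * t = p / 2 * t powr (p / 2 - 1)"
      by (simp_all add: field_simps)
  qed auto
  then show ?thesis
    unfolding glue_profile_def[abs_def] glue_profile_deriv_def by simp
qed

lemma continuous_on_glue_profile_deriv: "continuous_on UNIV (glue_profile_deriv p)"
proof -
  have "continuous_on ({..1} \<union> {1..})
      (\<lambda>t. if t < 1 then (4 - p) / 2 + (p - 2) * t else p / 2 * t powr (p / 2 - 1))"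
    by (intro continuous_on_cases continuous_intros) (auto simp: field_simps)
  moreover have "{..1} \<union> {1::real..} = UNIV" by auto
  ultimately show ?thesis unfolding glue_profile_deriv_def[abs_def] by simp
qed

lemma has_real_derivative_example_fun:
  "(example_fun p has_real_derivative 2 * x * glue_profile_deriv p (x\<^sup>2)) (at x)"
proof -
  have "(glue_profile p has_real_derivative glue_profile_deriv p (x\<^sup>2)) (at (x\<^sup>2))"
    using has_vector_derivative_glue_profile by (simp add: has_real_derivative_iff_has_vector_derivative)
  moreover have "((\<lambda>x. x\<^sup>2) has_real_derivative 2 * x) (at x)"
    by (auto intro!: derivative_eq_intros)
  ultimately have "((\<lambda>x. glue_profile p (x\<^sup>2)) has_real_derivative glue_profile_deriv p (x\<^sup>2) * (2 * x)) (at x)"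
    by (rule DERIV_chain2)
  then show ?thesis
    unfolding example_fun_def[abs_def] by (simp add: mult_ac)
qed

lemma C1_differentiable_example_fun: "example_fun p C1_differentiable_on UNIV"
  unfolding C1_differentiable_on_def
proof (intro exI[of _ "\<lambda>x. 2 * x * glue_profile_deriv p (x\<^sup>2)"] conjI ballI)
  show "(example_fun p has_vector_derivative 2 * x * glue_profile_deriv p (x\<^sup>2)) (at x)" for x
    using has_real_derivative_example_fun by (simp add: has_real_derivative_iff_has_vector_derivative)
  have "continuous_on UNIV (\<lambda>x. glue_profile_deriv p (x\<^sup>2))"
    by (rule continuous_on_compose2[OF continuous_on_glue_profile_deriv]) (auto intro: continuous_intros)
  then show "continuous_on UNIV (\<lambda>x. 2 * x * glue_profile_deriv p (x\<^sup>2))"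
    by (intro continuous_intros)
qed

lemma example_fun_outside:
  assumes "1 \<le> \<bar>x\<bar>"
  shows "example_fun p x = \<bar>x\<bar> powr p"
proof -
  have "example_fun p x = (x\<^sup>2) powr (p / 2)"
    using assms abs_le_square_iff[of 1 x] by (simp add: example_fun_def glue_profile_def)
  also have "x\<^sup>2 = \<bar>x\<bar> powr 2"
    by (simp add: powr_numeral)
  also have "(\<bar>x\<bar> powr 2) powr (p / 2) = \<bar>x\<bar> powr p"
    by (subst powr_powr) simp
  finally show ?thesis .
qed

lemma example_fun_inside:
  assumes "0 < p" "p < 2" "\<bar>x\<bar> \<le> 1"
  shows "0 \<le> example_fun p x \<and> example_fun p x \<le> 8 * x\<^sup>2"
    and "\<bar>deriv (example_fun p) x\<bar> \<le> 8 * \<bar>x\<bar>"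
proof -
  have t: "0 \<le> x\<^sup>2" "x\<^sup>2 \<le> 1" using assms(3) by (auto simp: abs_square_le_1)
  define w where "w = (2 - p) * x\<^sup>2"
  have w: "0 \<le> w" "w \<le> 2 - p"
    using t assms(2) mult_left_mono[OF t(2), of "2 - p"] by (auto simp: w_def)
  have ex: "example_fun p x = x\<^sup>2 * ((4 - p) / 2 - w / 2)"
  proof (cases "x\<^sup>2 < 1")
    case False
    then have "x\<^sup>2 = 1" using t by simp
    then show ?thesis by (simp add: example_fun_def glue_profile_def w_def field_simps)
  qed (simp add: example_fun_def glue_profile_def w_def power2_eq_square field_simps)
  have "0 \<le> (4 - p) / 2 - w / 2" and le_8: "(4 - p) / 2 - w / 2 \<le> 8"
    using w assms(1) by (simp_all add: field_simps)
  then show "0 \<le> example_fun p x \<and> example_fun p x \<le> 8 * x\<^sup>2"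
    unfolding ex using mult_left_mono[OF le_8 t(1)] t(1) by (simp add: mult.commute)
  have g4: "\<bar>glue_profile_deriv p (x\<^sup>2)\<bar> \<le> 4"
  proof (cases "x\<^sup>2 < 1")
    case True
    then have "glue_profile_deriv p (x\<^sup>2) = (4 - p) / 2 - w"
      by (simp add: glue_profile_deriv_def w_def algebra_simps)
    then show ?thesis using w assms(1) by (simp add: abs_le_iff field_simps)
  next
    case False
    then have "x\<^sup>2 = 1" using t by simp
    then show ?thesis using assms(1,2) by (simp add: glue_profile_deriv_def)
  qed
  have "\<bar>2 * x * glue_profile_deriv p (x\<^sup>2)\<bar> \<le> 2 * \<bar>x\<bar> * 4"
    using mult_right_mono[OF g4 abs_ge_zero[of x]] by (simp add: abs_mult mult_ac)
  then show "\<bar>deriv (example_fun p) x\<bar> \<le> 8 * \<bar>x\<bar>"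
    using has_real_derivative_example_fun[THEN DERIV_imp_deriv] by simp
qed

lemma test_fun_example_fun:
  assumes "0 < \<beta> - \<epsilon>" "\<beta> - \<epsilon> < 2"
  shows "test_fun \<beta> 8 (2 - \<beta>) \<epsilon> (example_fun (\<beta> - \<epsilon>))"
  unfolding test_fun_def
  using C1_differentiable_example_fun example_fun_outside example_fun_inside[OF assms]
  by (auto simp: example_fun_def powr_numeral)

section \<open>Smallness of \<open>\<Gamma>\<^sub>2(u)(0)\<close> relative to \<open>(L u(0))\<^sup>2\<close>\<close>

lemma frac_L_Gamma2_bounds:
  fixes \<beta> \<Lambda> \<delta> :: real
  assumes "0 < \<beta>" "\<beta> < 2" "0 < \<Lambda>" "0 < \<delta>" "\<beta> + \<delta> > 1"
  shows "\<exists>\<epsilon>0 C0 C1. \<epsilon>0 > 0 \<and> C0 > 0 \<and> C1 > 0 \<and>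
           (\<forall>\<epsilon> u. admissible_eps \<beta> \<epsilon> \<and> \<epsilon> < \<epsilon>0 \<and> test_fun \<beta> \<Lambda> \<delta> \<epsilon> u \<longrightarrow>
              integrable lborel (L_integrand \<beta> u 0) \<and>
              frac_L \<beta> u 0 \<ge> C0 / \<epsilon> \<and>
              integrable (lborel \<Otimes>\<^sub>M lborel) (G2_integrand \<beta> u 0) \<and>
              0 < Gamma2 \<beta> u 0 \<and> Gamma2 \<beta> u 0 \<le> C1 / \<epsilon>)"
proof -
  interpret exponent_data \<beta> \<Lambda> \<delta>
    using assms by unfold_locales
  show ?thesis
  proof (intro exI conjI allI impI)
    show "0 < min (\<beta> / 4) 1" "0 < 2 * c_beta \<beta>" "0 < C_Gamma"
      using \<beta>_pos c_beta_pos[OF \<beta>_pos \<beta>_less_2] C_Gamma_pos by auto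
    fix \<epsilon> u
    assume H: "admissible_eps \<beta> \<epsilon> \<and> \<epsilon> < min (\<beta> / 4) 1 \<and> test_fun \<beta> \<Lambda> \<delta> \<epsilon> u"
    then interpret test_fun_data \<beta> \<Lambda> \<delta> \<epsilon> u
      by unfold_locales auto
    have \<epsilon>: "\<epsilon> \<le> \<beta> / 4" "\<epsilon> < 1" using H by auto
    show "integrable lborel (L_integrand \<beta> u 0)" "2 * c_beta \<beta> / \<epsilon> \<le> frac_L \<beta> u 0"
      "integrable (lborel \<Otimes>\<^sub>M lborel) (G2_integrand \<beta> u 0)" "0 < Gamma2 \<beta> u 0"
      "Gamma2 \<beta> u 0 \<le> C_Gamma / \<epsilon>"
      using integrable_L_integrand frac_L_ge integrable_G2_integrand[OF \<epsilon>(1)] Gamma2_pos[OF \<epsilon>(1)]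
        Gamma2_le[OF \<epsilon>] by simp_all
  qed
qed

lemma admissible_eps_less:
  assumes "0 < \<beta>" "0 < r"
  obtains \<epsilon> where "admissible_eps \<beta> \<epsilon>" "\<epsilon> < r"
proof
  define \<epsilon> where "\<epsilon> = min (r / 2) (if 1 < \<beta> then (\<beta> - 1) / 4 else \<beta> / 4)"
  show "admissible_eps \<beta> \<epsilon>" "\<epsilon> < r"
    using assms by (auto simp: admissible_eps_def \<epsilon>_def min_def)
qed

lemma less_mult_square_of_bounds:
  fixes \<epsilon> C0 C1 \<mu> L G :: real
  assumes "0 < \<epsilon>" "0 < C0" "0 \<le> \<mu>" "C0 / \<epsilon> \<le> L" "G \<le> C1 / \<epsilon>" "C1 * \<epsilon> < \<mu> * C0\<^sup>2"
  shows "G < \<mu> * L\<^sup>2"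
proof -
  have "C1 / \<epsilon> < \<mu> * (C0 / \<epsilon>)\<^sup>2"
    using assms(1,6) by (simp add: field_simps power2_eq_square)
  also have "\<dots> \<le> \<mu> * L\<^sup>2"
    using assms(1-4) by (intro mult_left_mono power_mono) auto
  finally show ?thesis using assms(5) by linarith
qed

lemma exists_test_fun_Gamma2_less:
  fixes \<beta> \<mu> :: real
  assumes "0 < \<beta>" "\<beta> < 2" and \<mu>: "0 < \<mu>"
  shows "\<exists>u \<epsilon> \<Lambda>' \<delta>'. admissible_eps \<beta> \<epsilon> \<and> \<Lambda>' > 0 \<and> \<delta>' > 0 \<and> \<beta> + \<delta>' > 1 \<and>
              test_fun \<beta> \<Lambda>' \<delta>' \<epsilon> u \<and>
              integrable lborel (L_integrand \<beta> u 0) \<and>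
              integrable (lborel \<Otimes>\<^sub>M lborel) (G2_integrand \<beta> u 0) \<and>
              0 < Gamma2 \<beta> u 0 \<and> Gamma2 \<beta> u 0 < \<mu> * (frac_L \<beta> u 0)\<^sup>2"
proof -
  obtain \<epsilon>0 C0 C1 where pos: "0 < \<epsilon>0" "0 < C0" "0 < C1"
    and bounds: "\<And>\<epsilon> u. admissible_eps \<beta> \<epsilon> \<Longrightarrow> \<epsilon> < \<epsilon>0 \<Longrightarrow> test_fun \<beta> 8 (2 - \<beta>) \<epsilon> u \<Longrightarrow>
      integrable lborel (L_integrand \<beta> u 0) \<and> C0 / \<epsilon> \<le> frac_L \<beta> u 0 \<and>
      integrable (lborel \<Otimes>\<^sub>M lborel) (G2_integrand \<beta> u 0) \<and>
      0 < Gamma2 \<beta> u 0 \<and> Gamma2 \<beta> u 0 \<le> C1 / \<epsilon>"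
    using frac_L_Gamma2_bounds[of \<beta> 8 "2 - \<beta>"] assms(1,2) by force
  obtain \<epsilon> where \<epsilon>: "admissible_eps \<beta> \<epsilon>" "\<epsilon> < min \<epsilon>0 (\<mu> * C0\<^sup>2 / C1)"
    using admissible_eps_less[of \<beta> "min \<epsilon>0 (\<mu> * C0\<^sup>2 / C1)"] assms pos by auto
  then have "0 < \<epsilon>" "\<epsilon> < \<beta> / 2" "\<epsilon> < \<epsilon>0" "C1 * \<epsilon> < \<mu> * C0\<^sup>2"
    using pos by (auto simp: admissible_eps_def field_simps)
  define u where "u = example_fun (\<beta> - \<epsilon>)"
  have u: "test_fun \<beta> 8 (2 - \<beta>) \<epsilon> u"
    unfolding u_def using assms \<open>0 < \<epsilon>\<close> \<open>\<epsilon> < \<beta> / 2\<close> by (intro test_fun_example_fun) auto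
  note R = bounds[OF \<epsilon>(1) \<open>\<epsilon> < \<epsilon>0\<close> u]
  have "C0 / \<epsilon> \<le> frac_L \<beta> u 0" "Gamma2 \<beta> u 0 \<le> C1 / \<epsilon>"
    using R by simp_all
  with \<mu> have "Gamma2 \<beta> u 0 < \<mu> * (frac_L \<beta> u 0)\<^sup>2"
    using less_mult_square_of_bounds \<open>0 < \<epsilon>\<close> pos(2) \<open>C1 * \<epsilon> < \<mu> * C0\<^sup>2\<close> by simp
  then show ?thesis
    using \<epsilon>(1) u R assms(2) by (intro exI[of _ u] exI[of _ \<epsilon>] exI[of _ 8] exI[of _ "2 - \<beta>"]) simp
qed

theorem theorem3p1:
  fixes \<beta> \<Lambda> \<delta> :: real
  assumes "0 < \<beta>" "\<beta> < 2" "0 < \<Lambda>" "0 < \<delta>" "\<beta> + \<delta> > 1"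
  shows "(\<exists>\<epsilon>0 C0 C1. \<epsilon>0 > 0 \<and> C0 > 0 \<and> C1 > 0 \<and>
           (\<forall>\<epsilon> u. admissible_eps \<beta> \<epsilon> \<and> \<epsilon> < \<epsilon>0 \<and> test_fun \<beta> \<Lambda> \<delta> \<epsilon> u \<longrightarrow>
              integrable lborel (L_integrand \<beta> u 0) \<and>
              frac_L \<beta> u 0 \<ge> C0 / \<epsilon> \<and>
              integrable (lborel \<Otimes>\<^sub>M lborel) (G2_integrand \<beta> u 0) \<and>
              0 < Gamma2 \<beta> u 0 \<and> Gamma2 \<beta> u 0 \<le> C1 / \<epsilon>))
       \<and> (\<forall>\<mu>>0. \<exists>u \<epsilon> \<Lambda>' \<delta>'. admissible_eps \<beta> \<epsilon> \<and> \<Lambda>' > 0 \<and> \<delta>' > 0 \<and> \<beta> + \<delta>' > 1 \<and>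
              test_fun \<beta> \<Lambda>' \<delta>' \<epsilon> u \<and>
              integrable lborel (L_integrand \<beta> u 0) \<and>
              integrable (lborel \<Otimes>\<^sub>M lborel) (G2_integrand \<beta> u 0) \<and>
              0 < Gamma2 \<beta> u 0 \<and> Gamma2 \<beta> u 0 < \<mu> * (frac_L \<beta> u 0)\<^sup>2)"
  by (rule conjI[OF frac_L_Gamma2_bounds[OF assms]], intro allI impI exists_test_fun_Gamma2_less)
    (use assms in auto)

end
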